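(* Let $n=5$, $x_i=i$ for $i=1,\dots,5$, and $Y_i=\beta_0+\beta_1x_i+\varepsilon_i$ with unknown $\beta_0,\beta_1\in\mathbb{R}$ and $\varepsilon_1,\dots,\varepsilon_5$ i.i.d. with a continuous distribution that is symmetric about $0$. Let $s_1<s_2<\cdots<s_{10}$ be the ten slopes $S_{ij}=(Y_i-Y_j)/(x_i-x_j)$, $i<j$, sorted increasingly. Define $p_2=P(\beta_1\in(s_2,s_{10})\wedge 2s_2\le s_1+s_9\wedge 2s_9<s_2+s_{10})$ and $p_3=P(\beta_1\in(s_1,s_9)\wedge s_1+s_9<2s_2\wedge s_2+s_{10}\le 2s_9)$. Then $p_2=p_3$.
   Context: Ties among the slopes occur with probability zero and are ignored. *)

theory Defs
  imports "HOL-Probability.Probability"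
begin

definition obs :: "real \<Rightarrow> real \<Rightarrow> (nat \<Rightarrow> real) \<Rightarrow> nat \<Rightarrow> real" where
  "obs b0 b1 e i = b0 + b1 * real i + e i"

definition slope :: "(nat \<Rightarrow> real) \<Rightarrow> nat \<Rightarrow> nat \<Rightarrow> real" where
  "slope Y i j = (Y i - Y j) / (real i - real j)"

definition sorted_slopes :: "(nat \<Rightarrow> real) \<Rightarrow> real list" where
  "sorted_slopes Y = sort [slope Y i j. i \<leftarrow> [1..<6], j \<leftarrow> [Suc i..<6]]"

text \<open>k-th smallest slope s_k, 1-indexed (k = 1..10).\<close>
definition os :: "(nat \<Rightarrow> real) \<Rightarrow> nat \<Rightarrow> real" where
  "os Y k = sorted_slopes Y ! (k - 1)"

end

theory Submission imports Defs begin

text \<open>Negating the noise reflects every observation about the regression line, hence every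
  pairwise slope about \<open>\<beta>\<^sub>1\<close>: \<open>S\<^sub>i\<^sub>j \<mapsto> 2\<beta>\<^sub>1 - S\<^sub>i\<^sub>j\<close>. Thus the order statistics are mapped to
  \<open>s\<^sub>k \<mapsto> 2\<beta>\<^sub>1 - s\<^sub>1\<^sub>1\<^sub>-\<^sub>k\<close>, and this turns the event defining \<open>p\<^sub>3\<close> into the one defining \<open>p\<^sub>2\<close>.
  Since the noise law is symmetric, negation preserves the product measure, so both events have
  the same probability.\<close>

lemma sort_map_reflect:
  fixes c :: "'a :: linordered_ab_group_add"
  shows "sort (map (\<lambda>x. c - x) xs) = map (\<lambda>x. c - x) (rev (sort xs))"
  by (rule properties_for_sort) (simp_all add: sorted_wrt_map sorted_wrt_rev)

lemma slope_obs_reflect: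
  assumes "e' i = - e i" "e' j = - e j" "i \<noteq> j"
  shows "slope (obs b0 b1 e') i j = 2 * b1 - slope (obs b0 b1 e) i j"
  using assms by (simp add: slope_def obs_def field_simps)

lemma sorted_slopes_reflect:
  assumes "\<And>i. i \<in> {1..5} \<Longrightarrow> e' i = - e i"
  shows "sorted_slopes (obs b0 b1 e') = map (\<lambda>x. 2 * b1 - x) (rev (sorted_slopes (obs b0 b1 e)))"
proof -
  have "[slope (obs b0 b1 e') i j. i \<leftarrow> [1..<6], j \<leftarrow> [Suc i..<6]]
      = map (\<lambda>x. 2 * b1 - x) [slope (obs b0 b1 e) i j. i \<leftarrow> [1..<6], j \<leftarrow> [Suc i..<6]]"
    using assms by (simp add: upt_rec slope_obs_reflect)
  then show ?thesis
    unfolding sorted_slopes_def by (simp add: sort_map_reflect)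
qed

lemma os_reflect:
  assumes "\<And>i. i \<in> {1..5} \<Longrightarrow> e' i = - e i" and "1 \<le> k" "k \<le> 10"
  shows "os (obs b0 b1 e') k = 2 * b1 - os (obs b0 b1 e) (11 - k)"
proof -
  have "length (sorted_slopes (obs b0 b1 e)) = 10"
    by (simp add: sorted_slopes_def upt_rec)
  moreover have "sorted_slopes (obs b0 b1 e') = map (\<lambda>x. 2 * b1 - x) (rev (sorted_slopes (obs b0 b1 e)))"
    using assms(1) by (rule sorted_slopes_reflect)
  ultimately show ?thesis
    using assms(2,3) by (simp add: os_def rev_nth)
qed

lemma measurable_compose_PiM:
  assumes "f \<in> M \<rightarrow>\<^sub>M M"
  shows "compose I f \<in> PiM I (\<lambda>_. M) \<rightarrow>\<^sub>M PiM I (\<lambda>_. M)"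
  unfolding compose_def
proof (rule measurable_restrict)
  fix i assume "i \<in> I"
  show "(\<lambda>x. f (x i)) \<in> PiM I (\<lambda>_. M) \<rightarrow>\<^sub>M M"
    using measurable_compose[OF measurable_component_singleton[OF \<open>i \<in> I\<close>] assms] .
qed

lemma distr_compose_PiM:
  assumes "prob_space M" "finite I" "f \<in> M \<rightarrow>\<^sub>M M" "distr M M f = M"
  shows "distr (PiM I (\<lambda>_. M)) (PiM I (\<lambda>_. M)) (compose I f) = PiM I (\<lambda>_. M)"
proof -
  have "product_prob_space (\<lambda>_::'i. M)"
    using assms(1) by (rule product_prob_spaceI)
  then have "distr (PiM I (\<lambda>_. M)) (PiM I (\<lambda>_. M)) (compose I f) = PiM I (\<lambda>_. distr M M f)"
    using assms(2,3) by (intro distr_PiM_finite_prob_space) simp_all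
  then show ?thesis
    using assms(4) by simp
qed

lemma measure_preimage_involution:
  assumes "\<phi> \<in> P \<rightarrow>\<^sub>M P" "distr P P \<phi> = P"
    and "\<And>x. x \<in> space P \<Longrightarrow> \<phi> (\<phi> x) = x" and "A \<subseteq> space P"
  shows "measure P (\<phi> -` A \<inter> space P) = measure P A"
proof (cases "A \<in> sets P")
  case True
  then show ?thesis
    using measure_distr[OF assms(1) True] assms(2) by simp
next
  case False
  have "A = \<phi> -` (\<phi> -` A \<inter> space P) \<inter> space P"
    using assms(3,4) measurable_space[OF assms(1)] by auto
  then have "\<phi> -` A \<inter> space P \<notin> sets P"
    using False measurable_sets[OF assms(1)] by metis
  then show ?thesis
    using False by (simp add: measure_notin_sets)
qed

theorem theorem7:
  fixes M :: "real measure" and b0 b1 :: real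
  assumes "prob_space M"
    and "sets M = sets borel"
    and "\<And>x. measure M {x} = 0"
    and "distr M borel uminus = M"
  shows "measure (PiM {1..5} (\<lambda>_. M))
           {e \<in> space (PiM {1..5} (\<lambda>_. M)).
              let s = os (obs b0 b1 e) in
              b1 \<in> {s 2<..<s 10} \<and> 2 * s 2 \<le> s 1 + s 9 \<and> 2 * s 9 < s 2 + s 10}
       = measure (PiM {1..5} (\<lambda>_. M))
           {e \<in> space (PiM {1..5} (\<lambda>_. M)).
              let s = os (obs b0 b1 e) in
              b1 \<in> {s 1<..<s 9} \<and> s 1 + s 9 < 2 * s 2 \<and> s 2 + s 10 \<le> 2 * s 9}"
    (is "measure ?P ?A2 = measure ?P ?A3")
proof -
  let ?\<phi> = "compose {1..5::nat} (uminus :: real \<Rightarrow> real)"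
  have uminus_M: "uminus \<in> M \<rightarrow>\<^sub>M M"
    using measurable_cong_sets[OF assms(2) assms(2)] by simp
  have "distr M M uminus = M"
    using assms(4) distr_cong[OF refl assms(2), where f=uminus and g=uminus] by simp
  then have \<phi>_preserving: "distr ?P ?P ?\<phi> = ?P"
    by (intro distr_compose_PiM assms(1) uminus_M) simp
  have \<phi>_measurable: "?\<phi> \<in> ?P \<rightarrow>\<^sub>M ?P"
    by (rule measurable_compose_PiM[OF uminus_M])
  have \<phi>_involution: "?\<phi> (?\<phi> e) = e" if "e \<in> space ?P" for e
    using that by (auto simp: space_PiM compose_def PiE_def extensional_def)
  have "os (obs b0 b1 (?\<phi> e)) k = 2 * b1 - os (obs b0 b1 e) (11 - k)"
    if "k \<in> {1, 2, 9, 10}" for e k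
    using that by (intro os_reflect) (auto simp: compose_def)
  then have "?A3 = ?\<phi> -` ?A2 \<inter> space ?P"
    using measurable_space[OF \<phi>_measurable] by (auto simp: Let_def)
  moreover have "measure ?P (?\<phi> -` ?A2 \<inter> space ?P) = measure ?P ?A2"
    by (rule measure_preimage_involution[OF \<phi>_measurable \<phi>_preserving \<phi>_involution]) auto
  ultimately show ?thesis
    by simp
qed

end
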